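(* Let $X$ be any real random variable and $q(x)=\min\{\mathbb{P}(X\leqslant x),\mathbb{P}(X\geqslant x)\}$. Let $p>-1$, $p\neq 0$. (a) If $p>0$, then $\big(2^p(p+1)\big)^{-1}\leqslant\mathbb{E}\big(q(X)^p\big)\leqslant 1$. (b) If $-1<p<0$, then $1\leqslant\mathbb{E}\big(q(X)^p\big)\leqslant\big(2^p(p+1)\big)^{-1}$. *)

theory Defs
  imports "HOL-Probability.Probability"
begin

definition qfun :: "'a measure \<Rightarrow> ('a \<Rightarrow> real) \<Rightarrow> real \<Rightarrow> real" where
  "qfun M X x = min (measure M {\<omega> \<in> space M. X \<omega> \<le> x}) (measure M {\<omega> \<in> space M. X \<omega> \<ge> x})"

end

theory Submission
  imports Defs
begin

(* Write F(x) = P(X <= x) and G(x) = P(X >= x). The event {q(X) <= t} lies in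
   {F(X) <= t} \<union> {G(X) <= t}, and each of these has probability at most t, so
   P(q(X) <= t) <= 2t: q(X) stochastically dominates the uniform law on [0, 1/2].
   Through the layer-cake formula E Y^p = \<integral>_0^\<infinity> P(Y^p > s) ds, this domination
   bounds E q(X)^p by the p-th moment 1/(2^p (p+1)) of that uniform law, from below
   for p > 0 and from above for p < 0. The other two bounds come from 0 < q(X) <= 1 a.s. *)

lemma powr_powr_inverse_add_one_div:
  fixes b p :: real
  assumes "b > 0" "p > -1" "p \<noteq> 0"
  shows "(b powr p) powr (1 / p + 1) / (1 / p + 1) / b = b powr p * p / (p + 1)"
proof -
  have "p * (1 / p + 1) = 1 + p" using assms by (simp add: field_simps)
  then have "(b powr p) powr (1 / p + 1) = b * b powr p"
    using assms by (simp add: powr_powr powr_add)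
  moreover have "1 / p + 1 = (p + 1) / p" using assms by (simp add: field_simps)
  ultimately show ?thesis using assms by simp
qed

(* For U uniform on [0, b], P(U^p > s) is 1 - s^(1/p)/b on [0, b^p] if p > 0,
   and s^(1/p)/b on [b^p, \<infinity>) if p < 0. *)
lemma has_integral_uniform_powr_tail_pos:
  fixes b p :: real
  assumes "b > 0" "p > 0"
  shows "((\<lambda>s. 1 - s powr (1 / p) / b) has_integral b powr p / (p + 1)) {0..b powr p}"
proof -
  have "((\<lambda>s. 1 - s powr (1 / p) / b) has_integral
          b powr p - (b powr p) powr (1 / p + 1) / (1 / p + 1) / b) {0..b powr p}"
    using assms has_integral_const_real[of "1::real" 0 "b powr p"]
    by (intro has_integral_diff has_integral_divide has_integral_powr_from_0)
       (auto simp: less_trans[OF _ divide_pos_pos[of 1 p]])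
  also have "b powr p - (b powr p) powr (1 / p + 1) / (1 / p + 1) / b = b powr p / (p + 1)"
    using assms by (subst powr_powr_inverse_add_one_div) (auto simp: field_simps)
  finally show ?thesis .
qed

lemma has_integral_uniform_powr_tail_neg:
  fixes b p :: real
  assumes "b > 0" "-1 < p" "p < 0"
  shows "((\<lambda>s. s powr (1 / p) / b) has_integral b powr p / (p + 1) - b powr p) {b powr p..}"
proof -
  have "1 / p < -1" using assms by (simp add: field_simps)
  then have "((\<lambda>s. s powr (1 / p) / b) has_integral
          - ((b powr p) powr (1 / p + 1)) / (1 / p + 1) / b) {b powr p..}"
    using assms by (intro has_integral_divide has_integral_powr_to_inf) auto
  also have "- ((b powr p) powr (1 / p + 1)) / (1 / p + 1) / b = b powr p / (p + 1) - b powr p"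
    using assms by (simp only: minus_divide_left[symmetric], subst powr_powr_inverse_add_one_div)
       (auto simp: field_simps)
  finally show ?thesis .
qed

lemma (in sigma_finite_measure) nn_integral_layer_cake:
  fixes f :: "'a \<Rightarrow> real"
  assumes f: "f \<in> borel_measurable M" and nonneg: "\<And>\<omega>. \<omega> \<in> space M \<Longrightarrow> 0 \<le> f \<omega>"
  shows "(\<integral>\<^sup>+\<omega>. ennreal (f \<omega>) \<partial>M) =
    (\<integral>\<^sup>+s. indicator {0..} s * emeasure M {\<omega> \<in> space M. s < f \<omega>} \<partial>lborel)"
proof -
  define h where "h = (\<lambda>(\<omega>, s::real). indicator {0..<f \<omega>} s :: ennreal)"
  interpret pair_sigma_finite M lborel
    by (simp add: pair_sigma_finite_def sigma_finite_measure_axioms lborel.sigma_finite_measure_axioms)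
  have "h \<in> borel_measurable (M \<Otimes>\<^sub>M lborel)"
    unfolding h_def indicator_def atLeastLessThan_iff using f by measurable
  then have "(\<integral>\<^sup>+\<omega>. (\<integral>\<^sup>+s. h (\<omega>, s) \<partial>lborel) \<partial>M) = (\<integral>\<^sup>+s. (\<integral>\<^sup>+\<omega>. h (\<omega>, s) \<partial>M) \<partial>lborel)"
    by (rule Fubini[symmetric])
  moreover have "(\<integral>\<^sup>+s. h (\<omega>, s) \<partial>lborel) = ennreal (f \<omega>)" if "\<omega> \<in> space M" for \<omega>
    using nonneg[OF that] by (simp add: h_def)
  moreover have "(\<integral>\<^sup>+\<omega>. h (\<omega>, s) \<partial>M) = indicator {0..} s * emeasure M {\<omega> \<in> space M. s < f \<omega>}"
    for s
  proof -
    have "{\<omega> \<in> space M. s < f \<omega>} \<in> sets M" using f by measurable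
    then have "(\<integral>\<^sup>+\<omega>. indicator {0..} s * indicator {\<omega> \<in> space M. s < f \<omega>} \<omega> \<partial>M) =
        indicator {0..} s * emeasure M {\<omega> \<in> space M. s < f \<omega>}"
      by (rule nn_integral_cmult_indicator)
    then show ?thesis
      by (subst (asm) nn_integral_cong[where v = "\<lambda>\<omega>. h (\<omega>, s)"]) (auto simp: h_def indicator_def)
  qed
  ultimately show ?thesis by (simp cong: nn_integral_cong)
qed

context prob_space
begin

lemma borel_measurable_prob_le:
  fixes X :: "'a \<Rightarrow> real"
  assumes "X \<in> borel_measurable M"
  shows "(\<lambda>x. prob {\<omega> \<in> space M. X \<omega> \<le> x}) \<in> borel_measurable borel"
  using assms by (intro borel_measurable_mono monoI finite_measure_mono) auto

lemma prob_cdf_comp_le: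
  fixes X :: "'a \<Rightarrow> real"
  assumes X: "X \<in> borel_measurable M" and "0 \<le> t"
  shows "prob {\<omega> \<in> space M. prob {\<omega>' \<in> space M. X \<omega>' \<le> X \<omega>} \<le> t} \<le> t"
proof -
  define F where "F x = prob {\<omega>' \<in> space M. X \<omega>' \<le> x}" for x
  define A where "A = {x. F x \<le> t}"
  define N where "N = distr M borel X"
  have A: "A \<in> sets borel"
    unfolding A_def F_def using borel_measurable_prob_le[OF X] by measurable
  have fin: "emeasure N (space N) \<noteq> \<infinity>"
    unfolding N_def using X by (simp add: emeasure_distr)
  txt \<open>By inner regularity it suffices to bound N K for compact K \<subseteq> A, and N K \<le> F (max K).\<close>
  have "emeasure N A \<le> ennreal t"
    unfolding inner_regular[OF _ fin A, unfolded N_def, simplified, folded N_def]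
  proof (rule SUP_least, clarify)
    fix K assume K: "K \<subseteq> A" "compact K"
    show "emeasure N K \<le> ennreal t"
    proof (cases "K = {}")
      case False
      then obtain k where k: "k \<in> K" "\<And>x. x \<in> K \<Longrightarrow> x \<le> k"
        using compact_attains_sup[OF K(2)] by auto
      have "emeasure N K \<le> emeasure N {..k}"
        using k by (intro emeasure_mono) (auto simp: N_def)
      also have "\<dots> = ennreal (F k)"
        unfolding N_def F_def using X
        by (simp add: emeasure_distr emeasure_eq_measure vimage_def Int_def conj_commute)
      also have "\<dots> \<le> ennreal t" using k K by (auto simp: A_def intro!: ennreal_leI)
      finally show ?thesis .
    qed simp
  qed
  moreover have "emeasure N A = emeasure M {\<omega> \<in> space M. F (X \<omega>) \<le> t}"
    unfolding N_def using X A by (simp add: emeasure_distr vimage_def A_def Int_def conj_commute)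
  ultimately show ?thesis
    using \<open>0 \<le> t\<close> by (simp add: F_def emeasure_eq_measure)
qed

lemma qfun_nonneg: "0 \<le> qfun M X x"
  by (simp add: qfun_def)

lemma qfun_le_1: "qfun M X x \<le> 1"
  by (simp add: qfun_def min_le_iff_disj)

lemma borel_measurable_qfun:
  fixes X :: "'a \<Rightarrow> real"
  assumes X: "X \<in> borel_measurable M"
  shows "qfun M X \<in> borel_measurable borel"
proof -
  have "(\<lambda>\<omega>. - X \<omega>) \<in> borel_measurable M" using X by measurable
  have "(\<lambda>x. prob {\<omega> \<in> space M. x \<le> X \<omega>}) = (\<lambda>x. prob {\<omega> \<in> space M. - X \<omega> \<le> x}) \<circ> uminus"
    by (auto simp: fun_eq_iff)
  then have "(\<lambda>x. prob {\<omega> \<in> space M. x \<le> X \<omega>}) \<in> borel_measurable borel"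
    using borel_measurable_prob_le[OF \<open>(\<lambda>\<omega>. - X \<omega>) \<in> borel_measurable M\<close>] by simp
  then show ?thesis
    using borel_measurable_prob_le[OF X] unfolding qfun_def[abs_def] by measurable
qed

lemma prob_qfun_comp_le:
  fixes X :: "'a \<Rightarrow> real"
  assumes X: "X \<in> borel_measurable M" and "0 \<le> t"
  shows "prob {\<omega> \<in> space M. qfun M X (X \<omega>) \<le> t} \<le> 2 * t"
proof -
  have "(\<lambda>\<omega>. - X \<omega>) \<in> borel_measurable M" using X by measurable
  define L where "L = {\<omega> \<in> space M. prob {\<omega>' \<in> space M. X \<omega>' \<le> X \<omega>} \<le> t}"
  define R where "R = {\<omega> \<in> space M. prob {\<omega>' \<in> space M. - X \<omega>' \<le> - X \<omega>} \<le> t}"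
  have "L \<in> events" "R \<in> events"
    unfolding L_def R_def
    using X borel_measurable_prob_le[OF X]
      borel_measurable_prob_le[OF \<open>(\<lambda>\<omega>. - X \<omega>) \<in> borel_measurable M\<close>]
    by measurable
  have "{\<omega> \<in> space M. qfun M X (X \<omega>) \<le> t} \<subseteq> L \<union> R"
    by (auto simp: L_def R_def qfun_def min_le_iff_disj)
  then have "prob {\<omega> \<in> space M. qfun M X (X \<omega>) \<le> t} \<le> prob (L \<union> R)"
    using \<open>L \<in> events\<close> \<open>R \<in> events\<close> by (intro finite_measure_mono) auto
  also have "\<dots> \<le> prob L + prob R"
    using \<open>L \<in> events\<close> \<open>R \<in> events\<close> by (intro measure_subadditive) auto
  also have "\<dots> \<le> t + t"
    unfolding L_def R_def
    using prob_cdf_comp_le[OF X \<open>0 \<le> t\<close>] prob_cdf_comp_le[OF \<open>(\<lambda>\<omega>. - X \<omega>) \<in> borel_measurable M\<close> \<open>0 \<le> t\<close>]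
    by (rule add_mono)
  finally show ?thesis by simp
qed

lemma prob_powr_gt_ge:
  fixes Y :: "'a \<Rightarrow> real"
  assumes Y: "Y \<in> borel_measurable M" and "b > 0" "p > 0" "0 \<le> s"
    and small: "\<And>t. 0 \<le> t \<Longrightarrow> prob {\<omega> \<in> space M. Y \<omega> \<le> t} \<le> t / b"
  shows "1 - s powr (1 / p) / b \<le> prob {\<omega> \<in> space M. s < Y \<omega> powr p}"
proof -
  have "Y \<omega> \<le> s powr (1 / p)" if "Y \<omega> powr p \<le> s" for \<omega>
  proof (cases "Y \<omega> \<le> 0")
    case False
    then have "Y \<omega> = (Y \<omega> powr p) powr (1 / p)" using \<open>p > 0\<close> by (simp add: powr_powr)
    also have "\<dots> \<le> s powr (1 / p)" using that \<open>p > 0\<close> by (intro powr_mono2) auto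
    finally show ?thesis .
  qed (meson order_trans powr_ge_zero)
  then have "prob {\<omega> \<in> space M. Y \<omega> powr p \<le> s} \<le> prob {\<omega> \<in> space M. Y \<omega> \<le> s powr (1 / p)}"
    using Y by (intro finite_measure_mono) auto
  also have "\<dots> \<le> s powr (1 / p) / b" by (rule small) simp
  moreover have "prob {\<omega> \<in> space M. s < Y \<omega> powr p} = 1 - prob {\<omega> \<in> space M. Y \<omega> powr p \<le> s}"
    using Y by (subst prob_compl[symmetric]) (auto intro!: arg_cong[where f = prob])
  ultimately show ?thesis by linarith
qed

lemma prob_powr_gt_le:
  fixes Y :: "'a \<Rightarrow> real"
  assumes Y: "Y \<in> borel_measurable M" and "b > 0" "p < 0" "0 < s"
    and small: "\<And>t. 0 \<le> t \<Longrightarrow> prob {\<omega> \<in> space M. Y \<omega> \<le> t} \<le> t / b"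
  shows "prob {\<omega> \<in> space M. s < Y \<omega> powr p} \<le> s powr (1 / p) / b"
proof -
  have "Y \<omega> \<le> s powr (1 / p)" if "s < Y \<omega> powr p" for \<omega>
  proof (cases "Y \<omega> \<le> 0")
    case False
    then have "Y \<omega> = (Y \<omega> powr p) powr (1 / p)" using \<open>p < 0\<close> by (simp add: powr_powr)
    also have "\<dots> < s powr (1 / p)" using that \<open>p < 0\<close> \<open>0 < s\<close> by (intro powr_less_mono2_neg) auto
    finally show ?thesis by simp
  qed (meson order_trans powr_ge_zero)
  then have "prob {\<omega> \<in> space M. s < Y \<omega> powr p} \<le> prob {\<omega> \<in> space M. Y \<omega> \<le> s powr (1 / p)}"
    using Y by (intro finite_measure_mono) auto
  also have "\<dots> \<le> s powr (1 / p) / b" by (rule small) simp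
  finally show ?thesis .
qed

lemma nn_integral_powr_ge:
  fixes Y :: "'a \<Rightarrow> real"
  assumes Y: "Y \<in> borel_measurable M" and "b > 0" "p > 0"
    and small: "\<And>t. 0 \<le> t \<Longrightarrow> prob {\<omega> \<in> space M. Y \<omega> \<le> t} \<le> t / b"
  shows "ennreal (b powr p / (p + 1)) \<le> (\<integral>\<^sup>+\<omega>. ennreal (Y \<omega> powr p) \<partial>M)"
proof -
  let ?c = "b powr p" and ?g = "\<lambda>s. 1 - s powr (1 / p) / b"
  have "?g s \<ge> 0" if "s \<in> {0..?c}" for s
  proof -
    have "s powr (1 / p) \<le> ?c powr (1 / p)" using that \<open>p > 0\<close> by (intro powr_mono2) auto
    also have "\<dots> = b" using \<open>b > 0\<close> \<open>p > 0\<close> by (simp add: powr_powr)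
    finally show ?thesis using \<open>b > 0\<close> by simp
  qed
  then have "ennreal (b powr p / (p + 1)) = (\<integral>\<^sup>+s. ennreal (indicator {0..?c} s * ?g s) \<partial>lborel)"
    using has_integral_uniform_powr_tail_pos[OF \<open>b > 0\<close> \<open>p > 0\<close>]
    by (rule nn_integral_has_integral_lebesgue[symmetric])
  also have "\<dots> \<le> (\<integral>\<^sup>+s. indicator {0..} s * emeasure M {\<omega> \<in> space M. s < Y \<omega> powr p} \<partial>lborel)"
    using prob_powr_gt_ge[OF Y \<open>b > 0\<close> \<open>p > 0\<close> _ small]
    by (intro nn_integral_mono) (auto simp: indicator_def emeasure_eq_measure intro: ennreal_leI)
  also have "\<dots> = (\<integral>\<^sup>+\<omega>. ennreal (Y \<omega> powr p) \<partial>M)"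
    using Y by (intro nn_integral_layer_cake[symmetric]) auto
  finally show ?thesis .
qed

lemma nn_integral_powr_le:
  fixes Y :: "'a \<Rightarrow> real"
  assumes Y: "Y \<in> borel_measurable M" and "b > 0" "-1 < p" "p < 0"
    and small: "\<And>t. 0 \<le> t \<Longrightarrow> prob {\<omega> \<in> space M. Y \<omega> \<le> t} \<le> t / b"
  shows "(\<integral>\<^sup>+\<omega>. ennreal (Y \<omega> powr p) \<partial>M) \<le> ennreal (b powr p / (p + 1))"
proof -
  let ?c = "b powr p" and ?g = "\<lambda>s. s powr (1 / p) / b"
  have tail: "(?g has_integral b powr p / (p + 1) - ?c) {?c..}"
    using has_integral_uniform_powr_tail_neg[OF \<open>b > 0\<close> \<open>-1 < p\<close> \<open>p < 0\<close>] .
  then have tail_nn: "(\<integral>\<^sup>+s. ennreal (indicator {?c..} s * ?g s) \<partial>lborel) = ennreal (b powr p / (p + 1) - ?c)"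
    by (rule nn_integral_has_integral_lebesgue[rotated]) (use \<open>b > 0\<close> in simp)
  have "(\<integral>\<^sup>+\<omega>. ennreal (Y \<omega> powr p) \<partial>M) =
      (\<integral>\<^sup>+s. indicator {0..} s * emeasure M {\<omega> \<in> space M. s < Y \<omega> powr p} \<partial>lborel)"
    using Y by (intro nn_integral_layer_cake) auto
  also have "\<dots> \<le> (\<integral>\<^sup>+s. indicator {0..?c} s + ennreal (indicator {?c..} s * ?g s) \<partial>lborel)"
  proof (intro nn_integral_mono)
    fix s :: real
    consider "s < 0" | "0 \<le> s" "s \<le> ?c" | "?c < s" by fastforce
    then show "indicator {0..} s * emeasure M {\<omega> \<in> space M. s < Y \<omega> powr p}
        \<le> indicator {0..?c} s + ennreal (indicator {?c..} s * ?g s)"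
    proof cases
      case 2
      then show ?thesis by (simp add: add_increasing2 emeasure_eq_measure)
    next
      case 3
      moreover have "0 < s" using 3 \<open>b > 0\<close> powr_gt_zero[of b p] by linarith
      ultimately show ?thesis
        using prob_powr_gt_le[OF Y \<open>b > 0\<close> \<open>p < 0\<close> _ small, of s]
        by (simp add: emeasure_eq_measure ennreal_leI)
    qed simp
  qed
  also have "\<dots> = ennreal ?c + ennreal (b powr p / (p + 1) - ?c)"
    by (subst nn_integral_add) (auto simp: tail_nn[simplified])
  also have "\<dots> = ennreal (b powr p / (p + 1))"
    using has_integral_nonneg[OF tail] \<open>b > 0\<close> by (subst ennreal_plus[symmetric]) auto
  finally show ?thesis .
qed

lemma nn_integral_powr_le_1:
  fixes Y :: "'a \<Rightarrow> real"
  assumes "\<And>\<omega>. \<omega> \<in> space M \<Longrightarrow> \<bar>Y \<omega>\<bar> \<le> 1" and "0 \<le> p"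
  shows "(\<integral>\<^sup>+\<omega>. ennreal (Y \<omega> powr p) \<partial>M) \<le> 1"
proof -
  have "(\<integral>\<^sup>+\<omega>. ennreal (Y \<omega> powr p) \<partial>M) \<le> (\<integral>\<^sup>+\<omega>. 1 \<partial>M)"
    using assms by (intro nn_integral_mono) (simp add: powr_le1)
  then show ?thesis by (simp add: emeasure_space_1)
qed

lemma one_le_nn_integral_powr:
  fixes Y :: "'a \<Rightarrow> real"
  assumes "AE \<omega> in M. 0 < Y \<omega>" and "\<And>\<omega>. \<omega> \<in> space M \<Longrightarrow> Y \<omega> \<le> 1" and "p \<le> 0"
  shows "1 \<le> (\<integral>\<^sup>+\<omega>. ennreal (Y \<omega> powr p) \<partial>M)"
proof -
  have "AE \<omega> in M. 1 \<le> ennreal (Y \<omega> powr p)"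
    using AE_space assms(1)
  proof eventually_elim
    case (elim \<omega>)
    then show ?case using powr_mono2'[OF \<open>p \<le> 0\<close>, of "Y \<omega>" 1] assms(2) by (simp add: ennreal_leI)
  qed
  then have "(\<integral>\<^sup>+\<omega>. 1 \<partial>M) \<le> (\<integral>\<^sup>+\<omega>. ennreal (Y \<omega> powr p) \<partial>M)"
    by (rule nn_integral_mono_AE)
  then show ?thesis by (simp add: emeasure_space_1)
qed

end

theorem proposition3p2:
  fixes M :: "'a measure" and X :: "'a \<Rightarrow> real" and p :: real
  assumes "prob_space M"
    and "X \<in> borel_measurable M"
    and "p > -1" and "p \<noteq> 0"
  shows "(p > 0 \<longrightarrow>
            ennreal (1 / (2 powr p * (p + 1))) \<le> (\<integral>\<^sup>+ \<omega>. ennreal (qfun M X (X \<omega>) powr p) \<partial>M)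
          \<and> (\<integral>\<^sup>+ \<omega>. ennreal (qfun M X (X \<omega>) powr p) \<partial>M) \<le> 1)
       \<and> (p < 0 \<longrightarrow>
            1 \<le> (\<integral>\<^sup>+ \<omega>. ennreal (qfun M X (X \<omega>) powr p) \<partial>M)
          \<and> (\<integral>\<^sup>+ \<omega>. ennreal (qfun M X (X \<omega>) powr p) \<partial>M) \<le> ennreal (1 / (2 powr p * (p + 1))))"
proof -
  interpret prob_space M by fact
  note X = \<open>X \<in> borel_measurable M\<close>
  have Q: "(\<lambda>\<omega>. qfun M X (X \<omega>)) \<in> borel_measurable M"
    using borel_measurable_qfun[OF X] X by measurable
  have small: "prob {\<omega> \<in> space M. qfun M X (X \<omega>) \<le> t} \<le> t / (1 / 2)" if "0 \<le> t" for t
    using prob_qfun_comp_le[OF X that] by simp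
  have "prob {\<omega> \<in> space M. qfun M X (X \<omega>) \<le> 0} = 0"
    using small[of 0] measure_nonneg[of M] by (simp add: order_antisym)
  then have pos: "AE \<omega> in M. 0 < qfun M X (X \<omega>)"
    using Q by (subst (asm) prob_Collect_eq_0) auto
  have half: "(1 / 2) powr p / (p + 1) = 1 / (2 powr p * (p + 1))"
    by (simp add: powr_divide)
  have "\<bar>qfun M X x\<bar> \<le> 1" for x
    using qfun_nonneg[of X x] qfun_le_1[of X x] by simp
  then show ?thesis
    using nn_integral_powr_ge[OF Q _ _ small, where p = p, unfolded half]
      nn_integral_powr_le[OF Q _ \<open>p > -1\<close> _ small, unfolded half]
      nn_integral_powr_le_1[of "\<lambda>\<omega>. qfun M X (X \<omega>)" p] one_le_nn_integral_powr[OF pos qfun_le_1, of p]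
    by auto
qed

end
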